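(* Let $k\ge2$ and $-\frac{\pi}{2}\le\theta_1<\theta_2<\dots<\theta_k\le\frac{\pi}{2}$, $\theta_{\min}=\min_{p\ne j}|\theta_p-\theta_j|$, and $V_k(k-1)=(\phi_{k-1}(e^{i\theta_1}),\dots,\phi_{k-1}(e^{i\theta_k}))$. Then $$\|V_k(k-1)^{-1}\|_\infty\le\frac{\pi^{k-1}}{\zeta(k)\,\theta_{\min}^{k-1}}.$$
   Context: $\phi_s(z)=(1,z,\dots,z^s)^T$. For an integer $k\ge1$, $\zeta(k)=\big((\tfrac{k-1}{2})!\big)^2$ if $k$ is odd and $\zeta(k)=(\tfrac{k}{2})!(\tfrac{k-2}{2})!$ if $k$ is even. $\|\cdot\|_\infty$ is the matrix norm induced by the vector $\ell^\infty$ norm (maximum absolute row sum). *)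

theory Defs
  imports "HOL-Analysis.Analysis" "Jordan_Normal_Form.Matrix"
begin

definition zeta_fact :: "nat \<Rightarrow> nat" where
  "zeta_fact k = (if odd k then (fact ((k - 1) div 2))^2
                  else fact (k div 2) * fact ((k - 2) div 2))"

text \<open>V_k(k-1) = (phi_{k-1}(e^{i theta_1}), ..., phi_{k-1}(e^{i theta_k})): a k x k matrix
  whose j-th column is (1, z_j, ..., z_j^(k-1)) with z_j = e^{i theta_j}.
  Nodes are indexed 0..k-1.\<close>
definition vandermonde_circ :: "nat \<Rightarrow> (nat \<Rightarrow> real) \<Rightarrow> complex mat" where
  "vandermonde_circ k \<theta> = mat k k (\<lambda>(r, j). (exp (\<i> * complex_of_real (\<theta> j))) ^ r)"

text \<open>Matrix norm induced by the l-infinity vector norm: maximum absolute row sum.\<close>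
definition mat_inf_norm :: "complex mat \<Rightarrow> real" where
  "mat_inf_norm A = Max {(\<Sum>j<dim_col A. cmod (A $$ (i, j))) | i. i < dim_row A}"

definition theta_min :: "nat \<Rightarrow> (nat \<Rightarrow> real) \<Rightarrow> real" where
  "theta_min k \<theta> = Min {\<bar>\<theta> p - \<theta> j\<bar> | p j. p < k \<and> j < k \<and> p \<noteq> j}"

end

theory Submission
  imports Defs "Jordan_Normal_Form.Determinant" "HOL-Computational_Algebra.Polynomial"
begin

text \<open>A left inverse W of the Vandermonde matrix has as its j-th row the coefficients of the
  Lagrange polynomial \<open>L\<^sub>j(x) = \<Prod>\<^bsub>l\<noteq>j\<^esub> (x - z\<^sub>l) / \<Prod>\<^bsub>l\<noteq>j\<^esub> (z\<^sub>j - z\<^sub>l)\<close> of the nodes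
  \<open>z\<^sub>l = exp (\<i> \<theta>\<^sub>l)\<close>. For unit nodes the numerator has coefficient \<open>\<ell>\<^sup>1\<close>-norm at most \<open>2 ^ (k - 1)\<close>.
  By Jordan's inequality the chord \<open>|z\<^sub>j - z\<^sub>l|\<close> is at least \<open>2 |\<theta>\<^sub>j - \<theta>\<^sub>l| / \<pi> \<ge> 2 |j - l| \<theta>_min / \<pi>\<close>,
  so the denominator is at least \<open>(2 \<theta>_min / \<pi>) ^ (k - 1) j! (k - 1 - j)!\<close>; finally
  \<open>j! (k - 1 - j)! \<ge> \<zeta>(k)\<close> because the central binomial coefficient is the largest.\<close>

lemma Jordan_inequality:
  fixes x :: real
  assumes "\<bar>x\<bar> \<le> pi / 2"
  shows "2 * \<bar>x\<bar> / pi \<le> \<bar>sin x\<bar>"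
proof -
  have concave: "convex_on {0..pi} (\<lambda>x. - sin x)"
  proof (rule convex_on_realI[where f' = "\<lambda>x. - cos x"])
    show "((\<lambda>x. - sin x) has_real_derivative - cos x) (at x)" for x
      by (auto intro!: derivative_eq_intros)
    show "- cos x \<le> - cos y" if "x \<in> {0..pi}" "y \<in> {0..pi}" "x \<le> y" for x y
      using that cos_monotone_0_pi_le by auto
  qed simp
  define t where "t = 2 * \<bar>x\<bar> / pi"
  have t: "0 \<le> t" "t \<le> 1" using assms by (auto simp: t_def field_simps)
  have "- sin ((1 - t) *\<^sub>R 0 + t *\<^sub>R (pi / 2)) \<le> (1 - t) * (- sin 0) + t * (- sin (pi / 2))"
    using convex_onD[OF concave, of t 0 "pi / 2"] t by auto
  moreover have "(1 - t) *\<^sub>R 0 + t *\<^sub>R (pi / 2) = \<bar>x\<bar>" by (simp add: t_def)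
  moreover have "sin \<bar>x\<bar> = \<bar>sin x\<bar>"
    using assms sin_ge_zero[of "\<bar>x\<bar>"] by (cases "x \<ge> 0") auto
  ultimately show ?thesis by (simp add: t_def)
qed

lemma norm_exp_i_diff_ge:
  fixes a b :: real
  assumes "\<bar>a - b\<bar> \<le> pi"
  shows "2 * \<bar>a - b\<bar> / pi \<le> cmod (exp (\<i> * of_real a) - exp (\<i> * of_real b))"
proof -
  have "exp (\<i> * of_real a) - exp (\<i> * of_real b) = exp (\<i> * of_real b) * (exp (\<i> * of_real (a - b)) - 1)"
    by (simp add: exp_add[symmetric] algebra_simps)
  then have "cmod (exp (\<i> * of_real a) - exp (\<i> * of_real b)) = 2 * \<bar>sin ((a - b) / 2)\<bar>"
    by (simp only: norm_mult norm_exp_i_times dist_exp_i_1 mult_1)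
  moreover have "2 * \<bar>(a - b) / 2\<bar> / pi \<le> \<bar>sin ((a - b) / 2)\<bar>"
    using assms by (intro Jordan_inequality) simp
  ultimately show ?thesis by simp
qed

definition coeff_norm1 :: "nat \<Rightarrow> 'a::real_normed_field poly \<Rightarrow> real" where
  "coeff_norm1 n p = (\<Sum>i<n. norm (coeff p i))"

lemma coeff_norm1_add: "coeff_norm1 n (p + q) \<le> coeff_norm1 n p + coeff_norm1 n q"
  unfolding coeff_norm1_def sum.distrib[symmetric] by (intro sum_mono) (simp add: norm_triangle_ineq)

lemma coeff_norm1_smult: "coeff_norm1 n (Polynomial.smult a p) = norm a * coeff_norm1 n p"
  by (simp add: coeff_norm1_def norm_mult sum_distrib_left)

lemma coeff_norm1_pCons_0: "coeff_norm1 n (pCons 0 p) \<le> coeff_norm1 n p"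
proof (cases n)
  case (Suc m)
  then have "coeff_norm1 n (pCons 0 p) = coeff_norm1 m p"
    unfolding coeff_norm1_def Suc sum.lessThan_Suc_shift by simp
  also have "\<dots> \<le> coeff_norm1 n p" by (simp add: Suc coeff_norm1_def)
  finally show ?thesis .
qed (simp add: coeff_norm1_def)

lemma coeff_norm1_linear_factor_mult:
  "coeff_norm1 n ([:- a, 1:] * p) \<le> (1 + norm a) * coeff_norm1 n p"
proof -
  have "[:- a, 1:] * p = pCons 0 p + Polynomial.smult (- a) p" by (simp add: algebra_simps)
  then have "coeff_norm1 n ([:- a, 1:] * p) \<le> coeff_norm1 n (pCons 0 p) + norm a * coeff_norm1 n p"
    by (metis coeff_norm1_add coeff_norm1_smult norm_minus_cancel)
  then show ?thesis using coeff_norm1_pCons_0[of n p] by (simp add: algebra_simps)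
qed

lemma coeff_norm1_prod_linear_factors:
  fixes a :: "'b \<Rightarrow> 'a::real_normed_field"
  assumes "finite S"
  shows "coeff_norm1 n (\<Prod>l\<in>S. [:- a l, 1:]) \<le> (\<Prod>l\<in>S. 1 + norm (a l))"
  using assms
proof (induction S rule: finite_induct)
  case empty
  have "coeff_norm1 n (1 :: 'a poly) = (if n = 0 then 0 else 1)"
    by (induction n) (auto simp: coeff_norm1_def)
  then show ?case by simp
next
  case (insert x S)
  have "coeff_norm1 n (\<Prod>l\<in>insert x S. [:- a l, 1:]) \<le> (1 + norm (a x)) * coeff_norm1 n (\<Prod>l\<in>S. [:- a l, 1:])"
    using insert coeff_norm1_linear_factor_mult by simp
  also have "\<dots> \<le> (1 + norm (a x)) * (\<Prod>l\<in>S. 1 + norm (a l))"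
    using insert by (intro mult_left_mono) auto
  finally show ?case using insert by simp
qed

definition lagrange_basis :: "nat \<Rightarrow> (nat \<Rightarrow> 'a::field) \<Rightarrow> nat \<Rightarrow> 'a poly" where
  "lagrange_basis k z j =
     Polynomial.smult (inverse (\<Prod>l\<in>{..<k} - {j}. z j - z l)) (\<Prod>l\<in>{..<k} - {j}. [:- z l, 1:])"

lemma poly_lagrange_basis:
  assumes "inj_on z {..<k}" "j < k" "m < k"
  shows "poly (lagrange_basis k z j) (z m) = (if m = j then 1 else 0)"
proof -
  have "(\<Prod>l\<in>{..<k} - {j}. z m - z l) = (if m = j then (\<Prod>l\<in>{..<k} - {j}. z j - z l) else 0)"
    using assms by (auto simp: inj_on_eq_iff)
  moreover have "(\<Prod>l\<in>{..<k} - {j}. z j - z l) \<noteq> 0"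
    using assms by (auto simp: inj_on_eq_iff)
  ultimately show ?thesis by (simp add: lagrange_basis_def poly_prod)
qed

lemma degree_lagrange_basis:
  assumes "j < k"
  shows "degree (lagrange_basis k z j) < k"
proof -
  have "degree (lagrange_basis k z j) \<le> degree (\<Prod>l\<in>{..<k} - {j}. [:- z l, 1:])"
    unfolding lagrange_basis_def by (rule degree_smult_le)
  also have "\<dots> \<le> (\<Sum>l\<in>{..<k} - {j}. degree [:- z l, 1:])"
    using degree_prod_sum_le[of "{..<k} - {j}" "\<lambda>l. [:- z l, 1:]"] by (simp add: o_def)
  also have "\<dots> = k - 1" using assms by simp
  finally show ?thesis using assms by simp
qed

lemma coeff_norm1_lagrange_basis:
  fixes z :: "nat \<Rightarrow> 'a::real_normed_field"
  shows "coeff_norm1 n (lagrange_basis k z j) \<le> (\<Prod>l\<in>{..<k} - {j}. (1 + norm (z l)) / norm (z j - z l))"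
proof -
  have "coeff_norm1 n (lagrange_basis k z j)
      = inverse (\<Prod>l\<in>{..<k} - {j}. norm (z j - z l)) * coeff_norm1 n (\<Prod>l\<in>{..<k} - {j}. [:- z l, 1:])"
    by (simp add: lagrange_basis_def coeff_norm1_smult norm_inverse prod_norm)
  also have "\<dots> \<le> inverse (\<Prod>l\<in>{..<k} - {j}. norm (z j - z l)) * (\<Prod>l\<in>{..<k} - {j}. 1 + norm (z l))"
    by (intro mult_left_mono coeff_norm1_prod_linear_factors) (auto simp: prod_nonneg)
  also have "\<dots> = (\<Prod>l\<in>{..<k} - {j}. (1 + norm (z l)) / norm (z j - z l))"
    by (simp add: prod_dividef field_simps)
  finally show ?thesis .
qed

definition vandermonde_mat :: "nat \<Rightarrow> (nat \<Rightarrow> 'a::field) \<Rightarrow> 'a mat" where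
  "vandermonde_mat k z = mat k k (\<lambda>(r, j). z j ^ r)"

definition lagrange_mat :: "nat \<Rightarrow> (nat \<Rightarrow> 'a::field) \<Rightarrow> 'a mat" where
  "lagrange_mat k z = mat k k (\<lambda>(j, r). coeff (lagrange_basis k z j) r)"

lemma lagrange_mat_mult_vandermonde_mat:
  assumes "inj_on z {..<k}"
  shows "lagrange_mat k z * vandermonde_mat k z = 1\<^sub>m k"
proof (rule eq_matI)
  fix j m assume "j < dim_row (1\<^sub>m k :: 'a mat)" "m < dim_col (1\<^sub>m k :: 'a mat)"
  then have j: "j < k" and m: "m < k" by auto
  have "(lagrange_mat k z * vandermonde_mat k z) $$ (j, m) = (\<Sum>r<k. coeff (lagrange_basis k z j) r * z m ^ r)"
    using j m by (simp add: lagrange_mat_def vandermonde_mat_def scalar_prod_def atLeast0LessThan)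
  also have "\<dots> = poly (lagrange_basis k z j) (z m)"
    unfolding poly_altdef
    by (rule sum.mono_neutral_right) (use degree_lagrange_basis[of j k z] j in \<open>auto simp: coeff_eq_0\<close>)
  also have "\<dots> = 1\<^sub>m k $$ (j, m)" using poly_lagrange_basis[OF assms j m] j m by simp
  finally show "(lagrange_mat k z * vandermonde_mat k z) $$ (j, m) = 1\<^sub>m k $$ (j, m)" .
qed (simp_all add: lagrange_mat_def vandermonde_mat_def)

lemma invertible_mat_if_left_inverse:
  fixes A B :: "'a::field mat"
  assumes "A \<in> carrier_mat n n" "B \<in> carrier_mat n n" "B * A = 1\<^sub>m n"
  shows "invertible_mat A"
  using assms mat_mult_left_right_inverse[OF assms(2,1,3)]
  by (auto simp: invertible_mat_def inverts_mat_def)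

lemma left_inverse_mat_unique:
  fixes A B C :: "'a::field mat"
  assumes A: "A \<in> carrier_mat n n" and B: "B \<in> carrier_mat n n" and C: "C \<in> carrier_mat n n"
    and "B * A = 1\<^sub>m n" "C * A = 1\<^sub>m n"
  shows "C = B"
proof -
  have "C = C * (A * B)" using C mat_mult_left_right_inverse[OF B A \<open>B * A = 1\<^sub>m n\<close>] by simp
  also have "\<dots> = (C * A) * B" using A B C by (simp add: assoc_mult_mat)
  also have "\<dots> = B" using B \<open>C * A = 1\<^sub>m n\<close> by simp
  finally show ?thesis .
qed

lemma fact_mult_fact_ge_central:
  assumes "a \<le> n"
  shows "fact (n div 2) * fact (n - n div 2) \<le> (fact a * fact (n - a) :: nat)"
proof -
  have "fact a * fact (n - a) * (n choose a) = fact (n div 2) * fact (n - n div 2) * (n choose (n div 2))"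
    using binomial_fact_lemma[OF assms] binomial_fact_lemma[of "n div 2" n] by simp
  moreover have "n choose a \<le> n choose (n div 2)" by (rule binomial_maximum)
  moreover have "0 < n choose a" using assms by simp
  ultimately have "fact (n div 2) * fact (n - n div 2) * (n choose a) \<le> fact a * fact (n - a) * (n choose a)"
    by (metis mult_le_mono2)
  then show ?thesis using \<open>0 < n choose a\<close> by simp
qed

lemma zeta_fact_pos: "0 < zeta_fact k"
  by (simp add: zeta_fact_def)

lemma zeta_fact_le_fact_mult_fact:
  assumes "i < k"
  shows "zeta_fact k \<le> fact i * fact (k - 1 - i)"
proof -
  have "zeta_fact k = fact ((k - 1) div 2) * fact ((k - 1) - (k - 1) div 2)"
  proof (cases "odd k")
    case True
    then obtain m where "k = 2 * m + 1" by (rule oddE)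
    then show ?thesis by (simp add: zeta_fact_def power2_eq_square)
  next
    case False
    then obtain m where "k = 2 * m" by auto
    with assms obtain r where "k = 2 * Suc r" by (cases m) auto
    then show ?thesis using False by (simp add: zeta_fact_def mult.commute)
  qed
  also have "\<dots> \<le> fact i * fact (k - 1 - i)"
    using assms by (intro fact_mult_fact_ge_central) simp
  finally show ?thesis .
qed

lemma prod_index_dist:
  assumes "i < k"
  shows "(\<Prod>l\<in>{..<k} - {i}. \<bar>real i - real l\<bar>) = fact i * fact (k - 1 - i)"
proof -
  have split: "{..<k} - {i} = {..<i} \<union> (\<lambda>m. i + Suc m) ` {..<k - 1 - i}"
  proof (intro equalityI subsetI)
    fix l assume l: "l \<in> {..<k} - {i}"
    show "l \<in> {..<i} \<union> (\<lambda>m. i + Suc m) ` {..<k - 1 - i}"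
    proof (cases "l < i")
      case False
      with l have "l = i + Suc (l - Suc i)" "l - Suc i \<in> {..<k - 1 - i}" by auto
      then show ?thesis by (metis UnI2 rev_image_eqI)
    qed simp
  qed (use assms in auto)
  have "(\<Prod>l<i. \<bar>real i - real l\<bar>) = fact i"
    by (simp add: fact_prod_rev atLeast0LessThan of_nat_diff)
  moreover have "(\<Prod>l\<in>(\<lambda>m. i + Suc m) ` {..<k - 1 - i}. \<bar>real i - real l\<bar>) = fact (k - 1 - i)"
    by (subst prod.reindex) (auto simp: fact_prod_Suc atLeast0LessThan inj_on_def add.commute)
  ultimately show ?thesis
    unfolding split by (subst prod.union_disjoint) auto
qed

lemma coeff_norm1_lagrange_basis_unit_nodes:
  fixes z :: "nat \<Rightarrow> 'a::real_normed_field"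
  assumes unit: "\<And>l. l < k \<Longrightarrow> norm (z l) = 1"
    and separated: "\<And>l. l < k \<Longrightarrow> c * \<bar>real j - real l\<bar> \<le> norm (z j - z l)"
    and "0 < c" "j < k"
  shows "coeff_norm1 n (lagrange_basis k z j) \<le> (2 / c) ^ (k - 1) / zeta_fact k"
proof -
  have "coeff_norm1 n (lagrange_basis k z j) \<le> (\<Prod>l\<in>{..<k} - {j}. 2 / norm (z j - z l))"
    using coeff_norm1_lagrange_basis[of n k z j] unit by simp
  also have "\<dots> \<le> (\<Prod>l\<in>{..<k} - {j}. (2 / c) / \<bar>real j - real l\<bar>)"
  proof (rule prod_mono)
    fix l assume l: "l \<in> {..<k} - {j}"
    then have "0 < c * \<bar>real j - real l\<bar>" using \<open>0 < c\<close> by auto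
    moreover have "c * \<bar>real j - real l\<bar> \<le> norm (z j - z l)" using separated l by simp
    ultimately have "2 / norm (z j - z l) \<le> 2 / (c * \<bar>real j - real l\<bar>)"
      using \<open>0 < c\<close> by (intro divide_left_mono mult_pos_pos) auto
    then show "0 \<le> 2 / norm (z j - z l) \<and> 2 / norm (z j - z l) \<le> (2 / c) / \<bar>real j - real l\<bar>"
      by simp
  qed
  also have "\<dots> = (\<Prod>l\<in>{..<k} - {j}. 2 / c) / (\<Prod>l\<in>{..<k} - {j}. \<bar>real j - real l\<bar>)"
    by (rule prod_dividef)
  also have "\<dots> = (2 / c) ^ (k - 1) / (fact j * fact (k - 1 - j))"
    using \<open>j < k\<close> by (simp add: prod_index_dist)
  also have "\<dots> \<le> (2 / c) ^ (k - 1) / zeta_fact k"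
  proof (rule divide_left_mono)
    show "real (zeta_fact k) \<le> fact j * fact (k - 1 - j)"
      using zeta_fact_le_fact_mult_fact[OF \<open>j < k\<close>] by (metis of_nat_fact of_nat_le_iff of_nat_mult)
  qed (use zeta_fact_pos[of k] \<open>0 < c\<close> in auto)
  finally show ?thesis .
qed

lemma finite_theta_dists:
  fixes \<theta> :: "nat \<Rightarrow> real"
  shows "finite {\<bar>\<theta> p - \<theta> j\<bar> | p j. p < k \<and> j < k \<and> p \<noteq> j}"
proof (rule finite_subset)
  show "{\<bar>\<theta> p - \<theta> j\<bar> | p j. p < k \<and> j < k \<and> p \<noteq> j} \<subseteq> (\<lambda>(p, j). \<bar>\<theta> p - \<theta> j\<bar>) ` ({..<k} \<times> {..<k})"
    by auto
qed auto

lemma theta_min_le: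
  assumes "p < k" "j < k" "p \<noteq> j"
  shows "theta_min k \<theta> \<le> \<bar>\<theta> p - \<theta> j\<bar>"
  unfolding theta_min_def using assms by (intro Min_le finite_theta_dists) auto

lemma theta_min_pos:
  assumes "2 \<le> k" "inj_on \<theta> {..<k}"
  shows "0 < theta_min k \<theta>"
proof -
  have "\<bar>\<theta> 0 - \<theta> 1\<bar> \<in> {\<bar>\<theta> p - \<theta> j\<bar> | p j. p < k \<and> j < k \<and> p \<noteq> j}"
    using assms(1) by force
  then show ?thesis
    unfolding theta_min_def using assms finite_theta_dists
    by (subst Min_gr_iff) (auto simp: inj_on_eq_iff)
qed

lemma theta_min_mult_index_dist_le:
  assumes increasing: "\<And>p j. p < j \<Longrightarrow> j < k \<Longrightarrow> \<theta> p < \<theta> j"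
    and "i < k" "l < k"
  shows "\<bar>real i - real l\<bar> * theta_min k \<theta> \<le> \<bar>\<theta> i - \<theta> l\<bar>"
proof -
  have gap: "real (l - i) * theta_min k \<theta> \<le> \<theta> l - \<theta> i" if "i \<le> l" "l < k" for i l
    using that
  proof (induction l rule: dec_induct)
    case (step n)
    have "theta_min k \<theta> \<le> \<theta> (Suc n) - \<theta> n"
      using theta_min_le[of "Suc n" k n \<theta>] increasing[of n "Suc n"] step.prems by simp
    then show ?case using step by (simp add: Suc_diff_le algebra_simps)
  qed simp
  show ?thesis
    using gap[of i l] gap[of l i] assms by (cases "i \<le> l") (auto simp: of_nat_diff abs_minus_commute)
qed

lemma norm_exp_i_diff_ge_index_dist:
  assumes range: "\<And>j. j < k \<Longrightarrow> - (pi / 2) \<le> \<theta> j \<and> \<theta> j \<le> pi / 2"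
    and increasing: "\<And>p j. p < j \<Longrightarrow> j < k \<Longrightarrow> \<theta> p < \<theta> j"
    and "i < k" "l < k"
  shows "2 * theta_min k \<theta> / pi * \<bar>real i - real l\<bar>
    \<le> cmod (exp (\<i> * of_real (\<theta> i)) - exp (\<i> * of_real (\<theta> l)))"
proof -
  have "\<bar>real i - real l\<bar> * theta_min k \<theta> \<le> \<bar>\<theta> i - \<theta> l\<bar>"
    using theta_min_mult_index_dist_le[of k \<theta> i l] increasing assms(3,4) by blast
  then have "2 * theta_min k \<theta> / pi * \<bar>real i - real l\<bar> \<le> 2 * \<bar>\<theta> i - \<theta> l\<bar> / pi"
    by (simp add: divide_right_mono mult.commute)
  also have "\<dots> \<le> cmod (exp (\<i> * of_real (\<theta> i)) - exp (\<i> * of_real (\<theta> l)))"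
    using range[OF \<open>i < k\<close>] range[OF \<open>l < k\<close>] by (intro norm_exp_i_diff_ge) linarith
  finally show ?thesis .
qed

lemma mat_inf_norm_le:
  assumes "A \<in> carrier_mat k k" "0 < k"
    and "\<And>i. i < k \<Longrightarrow> (\<Sum>j<k. cmod (A $$ (i, j))) \<le> B"
  shows "mat_inf_norm A \<le> B"
proof -
  have "{\<Sum>j<dim_col A. cmod (A $$ (i, j)) | i. i < dim_row A} = (\<lambda>i. \<Sum>j<k. cmod (A $$ (i, j))) ` {..<k}"
    using assms(1) by auto
  then show ?thesis
    unfolding mat_inf_norm_def using assms(2,3) by (subst Max_le_iff) auto
qed

theorem lemma3p3:
  fixes k :: nat and \<theta> :: "nat \<Rightarrow> real"
  assumes "k \<ge> 2"
    and "\<And>j. j < k \<Longrightarrow> - (pi / 2) \<le> \<theta> j \<and> \<theta> j \<le> pi / 2"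
    and "\<And>p j. p < j \<Longrightarrow> j < k \<Longrightarrow> \<theta> p < \<theta> j"
  shows "invertible_mat (vandermonde_circ k \<theta>) \<and>
         (\<forall>W \<in> carrier_mat k k. W * vandermonde_circ k \<theta> = 1\<^sub>m k \<longrightarrow>
            mat_inf_norm W \<le> pi ^ (k - 1) / (real (zeta_fact k) * theta_min k \<theta> ^ (k - 1)))"
proof -
  define z where "z j = exp (\<i> * complex_of_real (\<theta> j))" for j
  define c where "c = 2 * theta_min k \<theta> / pi"
  have V: "vandermonde_circ k \<theta> = vandermonde_mat k z" and W0: "lagrange_mat k z \<in> carrier_mat k k"
    by (simp_all add: vandermonde_circ_def vandermonde_mat_def lagrange_mat_def z_def)
  have unit: "cmod (z l) = 1" for l by (simp add: z_def)
  have "inj_on \<theta> {..<k}"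
    using assms(3) by (metis inj_onI lessThan_iff linorder_neqE_nat less_irrefl)
  then have "0 < c" using theta_min_pos[OF assms(1)] by (simp add: c_def)
  have separated: "c * \<bar>real i - real l\<bar> \<le> cmod (z i - z l)" if "i < k" "l < k" for i l
    unfolding c_def z_def using norm_exp_i_diff_ge_index_dist[OF assms(2,3) that] .
  have "inj_on z {..<k}"
  proof (rule inj_onI)
    fix i l assume "i \<in> {..<k}" "l \<in> {..<k}" "z i = z l"
    then have "c * \<bar>real i - real l\<bar> \<le> 0" using separated by fastforce
    then show "i = l" using \<open>0 < c\<close> by (simp add: mult_le_0_iff)
  qed
  then have left_inverse: "lagrange_mat k z * vandermonde_circ k \<theta> = 1\<^sub>m k"
    unfolding V by (rule lagrange_mat_mult_vandermonde_mat)
  have "mat_inf_norm (lagrange_mat k z) \<le> (2 / c) ^ (k - 1) / zeta_fact k"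
  proof (rule mat_inf_norm_le[OF W0])
    fix i assume "i < k"
    have "coeff_norm1 k (lagrange_basis k z i) \<le> (2 / c) ^ (k - 1) / zeta_fact k"
      using unit separated \<open>0 < c\<close> \<open>i < k\<close> by (intro coeff_norm1_lagrange_basis_unit_nodes)
    then show "(\<Sum>j<k. cmod (lagrange_mat k z $$ (i, j))) \<le> (2 / c) ^ (k - 1) / zeta_fact k"
      using \<open>i < k\<close> by (simp add: lagrange_mat_def coeff_norm1_def)
  qed (use assms(1) in simp)
  moreover have "(2 / c) ^ (k - 1) / zeta_fact k = pi ^ (k - 1) / (real (zeta_fact k) * theta_min k \<theta> ^ (k - 1))"
    by (simp add: c_def power_divide)
  ultimately show ?thesis
    using invertible_mat_if_left_inverse[OF _ W0 left_inverse] left_inverse_mat_unique[OF _ W0 _ left_inverse]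
    by (auto simp: vandermonde_circ_def)
qed

end
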